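(* Let $\rho$ be a good involution of the dihedral quandle $R_n$. (1) For each $i\in R_n$, $\rho(i)=i$ or $\rho(i)=i+n/2$; the latter occurs only if $n$ is even. (2) Let $n$ be even. If $\rho(i)=i+n/2$ for some $i$, then $\rho(j)=j+n/2$ for every $j$ with $i\equiv j \pmod 2$.
   Context: A quandle is a set $X$ with a binary operation $(x,y)\mapsto x^y$ such that $x^x=x$; for all $x,y$ there is a unique $z$ with $z^y=x$ (written $x^{y^{-1}}$); and $(x^y)^z=(x^z)^{(y^z)}$. A good involution of $X$ is a map $\rho:X\to X$ with $\rho\circ\rho={\rm id}$, $\rho(x^y)=\rho(x)^y$ and $x^{\rho(y)}=x^{y^{-1}}$ for all $x,y$. The dihedral quandle $R_n$ is $\mathbb{Z}/n\mathbb{Z}$ with $x^y=2y-x \pmod n$. *)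

theory Defs
  imports Main
begin

text \<open>The dihedral quandle R_n: carrier {0..<n} (representatives of Z/nZ), x^y = 2y - x mod n.\<close>
definition dq :: "nat \<Rightarrow> nat \<Rightarrow> nat \<Rightarrow> nat" where
  "dq n x y = nat ((2 * int y - int x) mod int n)"

definition dq_inv :: "nat \<Rightarrow> nat \<Rightarrow> nat \<Rightarrow> nat" where
  "dq_inv n x y = (THE z. z < n \<and> dq n z y = x)"

definition good_involution_R :: "nat \<Rightarrow> (nat \<Rightarrow> nat) \<Rightarrow> bool" where
  "good_involution_R n \<rho> \<longleftrightarrow>
     (\<forall>x<n. \<rho> x < n) \<and>
     (\<forall>x<n. \<rho> (\<rho> x) = x) \<and>
     (\<forall>x<n. \<forall>y<n. \<rho> (dq n x y) = dq n (\<rho> x) y) \<and>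
     (\<forall>x<n. \<forall>y<n. dq n x (\<rho> y) = dq_inv n x y)"

end

theory Submission
  imports Defs
begin

text \<open>Every symmetry \<open>x \<mapsto> 2y - x\<close> of \<open>R\<^sub>n\<close> is an involution, so the axiom
  \<open>x^\<rho>(y) = x^(y^-1)\<close> reads \<open>x^\<rho>(y) = x^y\<close>; at \<open>x = 0\<close> this is
  \<open>2\<rho>(y) \<equiv> 2y (mod n)\<close>, hence \<open>\<rho>(y) - y\<close> is \<open>0\<close> or \<open>n/2\<close>. For part (2), \<open>j\<close> is the
  reflection of \<open>i\<close> in the midpoint \<open>y = (i + j)/2\<close>, and reflections commute with the
  translation by \<open>n/2\<close>, so \<open>\<rho>(j) = \<rho>(i^y) = \<rho>(i)^y = j + n/2\<close>.\<close>

lemma dq_int: "0 < n \<Longrightarrow> int (dq n x y) = (2 * int y - int x) mod int n"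
  unfolding dq_def by simp

lemma dq_less: "0 < n \<Longrightarrow> dq n x y < n"
  unfolding dq_def by (simp add: nat_less_iff)

lemma dq_dq:
  assumes "x < n"
  shows "dq n (dq n x y) y = x"
proof -
  have "int (dq n (dq n x y) y) = (2 * int y - (2 * int y - int x) mod int n) mod int n"
    using assms by (simp add: dq_int)
  also have "\<dots> = int x"
    using assms by (simp add: mod_diff_right_eq)
  finally show ?thesis by simp
qed

lemma dq_inv_eq_dq:
  assumes "x < n"
  shows "dq_inv n x y = dq n x y"
  unfolding dq_inv_def
proof (rule the_equality)
  show "dq n x y < n \<and> dq n (dq n x y) y = x"
    using assms by (simp add: dq_less dq_dq)
next
  fix z assume "z < n \<and> dq n z y = x"
  then show "z = dq n x y" by (metis dq_dq)
qed

lemma dq_midpoint: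
  assumes "i < n" "j < n" "even (i + j)"
  shows "dq n i ((i + j) div 2) = j"
proof -
  have "2 * int ((i + j) div 2) = int i + int j"
    using assms(3) by (metis dvd_mult_div_cancel of_nat_add of_nat_mult of_nat_numeral)
  then have "int (dq n i ((i + j) div 2)) = int j mod int n"
    using assms(1) by (simp add: dq_int)
  then show ?thesis
    using assms(2) by simp
qed

lemma dq_add_half:
  assumes "even n" "0 < n"
  shows "dq n ((x + n div 2) mod n) y = (dq n x y + n div 2) mod n"
proof -
  obtain m where n: "n = 2 * m" using assms(1) by blast
  have "int (dq n ((x + m) mod n) y) = (2 * int y - int x - int m) mod int n"
    using assms(2) by (simp add: dq_int zmod_int mod_diff_right_eq algebra_simps)
  also have "\<dots> = (2 * int y - int x - int m + int n) mod int n"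
    by simp
  also have "\<dots> = ((2 * int y - int x) mod int n + int m) mod int n"
  proof -
    have "2 * int y - int x - int m + int n = (2 * int y - int x) + int m"
      using n by simp
    then show ?thesis by (simp only: mod_add_left_eq)
  qed
  also have "\<dots> = int ((dq n x y + m) mod n)"
    using assms(2) by (simp add: dq_int zmod_int)
  finally show ?thesis using n by simp
qed

lemma double_cong_cases:
  assumes "r < n" "y < n" and cong: "(2 * int r) mod int n = (2 * int y) mod int n"
  shows "r = y \<or> (even n \<and> r = (y + n div 2) mod n)"
proof -
  define d where "d = int r - int y"
  have "int n dvd 2 * d"
    using cong unfolding d_def by (metis mod_eq_dvd_iff right_diff_distrib)
  have d_bound: "\<bar>d\<bar> < int n"
    using assms(1,2) unfolding d_def by auto
  show ?thesis
  proof (cases "even n")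
    case False
    then have "coprime (int n) 2" by (simp add: coprime_commute)
    with \<open>int n dvd 2 * d\<close> have "int n dvd d"
      using coprime_dvd_mult_right_iff by blast
    have "d = 0"
    proof (rule ccontr)
      assume "d \<noteq> 0"
      from dvd_imp_le_int[OF this \<open>int n dvd d\<close>] d_bound show False
        by simp
    qed
    then show ?thesis unfolding d_def by simp
  next
    case True
    then obtain m where n: "n = 2 * m" by blast
    with \<open>int n dvd 2 * d\<close> obtain k where k: "d = int m * k" by auto
    from d_bound n have "int m * \<bar>k\<bar> < int m * 2"
      by (simp add: k abs_mult)
    then have "\<bar>k\<bar> < 2"
      by (simp add: mult_less_cancel_left)
    then consider "k = 0" | "k = 1" | "k = -1"
      by linarith
    then show ?thesis
    proof cases
      case 1
      then show ?thesis using k unfolding d_def by simp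
    next
      case 2
      then have "r = y + m" using k unfolding d_def by simp
      then show ?thesis using \<open>r < n\<close> n True by simp
    next
      case 3
      then have "y = r + m" using k unfolding d_def by simp
      then have "(y + n div 2) mod n = r"
        using \<open>r < n\<close> n by (simp add: mod_add_self2[of r n, symmetric] add.assoc mult_2)
      then show ?thesis using True by simp
    qed
  qed
qed

lemma good_involution_double_cong:
  assumes "good_involution_R n \<rho>" "i < n"
  shows "(2 * int (\<rho> i)) mod int n = (2 * int i) mod int n"
proof -
  have "0 < n" using assms(2) by simp
  have "dq n 0 (\<rho> i) = dq_inv n 0 i"
    using assms unfolding good_involution_R_def by simp
  also have "\<dots> = dq n 0 i"
    using \<open>0 < n\<close> by (simp add: dq_inv_eq_dq)
  finally show ?thesis
    using \<open>0 < n\<close> by (metis dq_int diff_zero of_nat_0)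
qed

theorem lemma3p3:
  fixes n :: nat and \<rho> :: "nat \<Rightarrow> nat"
  assumes "n \<ge> 1" and "good_involution_R n \<rho>"
  shows "(\<forall>i<n. \<rho> i = i \<or> (even n \<and> \<rho> i = (i + n div 2) mod n))
       \<and> (even n \<longrightarrow> (\<forall>i<n. \<rho> i = (i + n div 2) mod n \<longrightarrow>
              (\<forall>j<n. i mod 2 = j mod 2 \<longrightarrow> \<rho> j = (j + n div 2) mod n)))"
proof (intro conjI allI impI)
  fix i assume "i < n"
  moreover from this assms(2) have "\<rho> i < n"
    unfolding good_involution_R_def by simp
  ultimately show "\<rho> i = i \<or> even n \<and> \<rho> i = (i + n div 2) mod n"
    using double_cong_cases good_involution_double_cong assms(2) by blast
next
  fix i j assume "even n" "i < n" "j < n" "i mod 2 = j mod 2"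
    and \<rho>_i: "\<rho> i = (i + n div 2) mod n"
  define y where "y = (i + j) div 2"
  have "y < n"
    using \<open>i < n\<close> \<open>j < n\<close> unfolding y_def by simp
  have "dq n i y = j"
    using \<open>i < n\<close> \<open>j < n\<close> \<open>i mod 2 = j mod 2\<close> unfolding y_def
    by (intro dq_midpoint) presburger+
  moreover have "\<rho> (dq n i y) = dq n (\<rho> i) y"
    using assms(2) \<open>i < n\<close> \<open>y < n\<close> unfolding good_involution_R_def by blast
  ultimately have "\<rho> j = dq n (\<rho> i) y" by simp
  also have "\<dots> = (j + n div 2) mod n"
    using \<rho>_i \<open>even n\<close> assms(1) \<open>dq n i y = j\<close> by (simp add: dq_add_half)
  finally show "\<rho> j = (j + n div 2) mod n" .
qed

end
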